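(* In the model described in the context, there exist parameters $\rho,q$ with $1>\rho>q>0$, a distribution $(\pi^{(0,0)},\pi^{(0,1)},\pi^{(1,0)},\pi^{(1,1)})$ of $(\tilde y_0^+,\tilde y_0^-)$ with $\pi^{(1,0)}<1$, and two label-flip probabilities $\nu_1\neq\nu_2$ in $[0,\tfrac12)$ such that, for each $j\in\{1,2\}$ (with $\nu=\nu_j$), there exists $m\ge2$ with $\Pr(W_2)<\Pr(W_1)$, and the smallest $m_0(\nu_j)$ such that $\Pr(W_2)>\Pr(W_1)$ for all $m\ge m_0(\nu_j)$ satisfies $m_0(\nu_1)\neq m_0(\nu_2)$. (For instance $\rho=0.15$, $q=0.01$, $\pi^{(1,0)}=0.55^2$, $\pi^{(0,1)}=0.45^2$, $\pi^{(0,0)}=\pi^{(1,1)}=0.55\cdot0.45$, $\nu\in\{0.05,0.2\}$.)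
   Context: Model. Fix an integer $m\ge 2$, and reals $1>\rho>q>0$, $0\le\nu<\tfrac12$. A sample consists of ground-truth labels $y_0,y_1,\dots,y_m\in\{0,1\}$ and noisy labels $\tilde y_0,\dots,\tilde y_m\in\{0,1\}$. Given $y_0$, the labels $y_1,\dots,y_m$ are conditionally independent with $\Pr(y_i=1\mid y_0=1)=\rho$ and $\Pr(y_i=1\mid y_0=0)=q$ for $i\in\{1,\dots,m\}$. For $i\in\{1,\dots,m\}$, $\tilde y_i = 1-y_i$ with probability $\nu$ and $\tilde y_i=y_i$ otherwise, the flips being independent of each other and of everything else. We draw one positive sample (superscript $+$, with $y_0^+=1$) and one negative sample (superscript $-$, with $y_0^-=0$) independently. The pair $(\tilde y_0^+,\tilde y_0^-)\in\{0,1\}^2$ has an arbitrary distribution, independent of all $y_i^\pm,\tilde y_i^\pm$ with $i\ge1$; write $\pi^{(u,v)}:=\Pr(\tilde y_0^+=u,\tilde y_0^-=v)$. Fix $\delta>0$. For each sample set $\bar s_{0,i} := \max(\tilde y_0,\tilde y_i)+\delta\min(\tilde y_0,\tilde y_i)$ for $i=1,\dots,m$, and let $\bar r_1\ge \bar r_2$ be the largest and second largest elements of $\{\bar s_{0,1},\dots,\bar s_{0,m}\}$ (as a multiset). For $k\in\{1,2\}$, $\Pr(W_k) := \Pr(\bar r_k^+>\bar r_k^-) + \tfrac12\Pr(\bar r_k^+=\bar r_k^-)$. *)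

theory Defs
  imports "HOL-Probability.Probability"
begin

definition noisy_label :: "real \<Rightarrow> real \<Rightarrow> real \<Rightarrow> bool \<Rightarrow> bool pmf" where
  "noisy_label \<rho> q \<nu> y0 =
     do { y \<leftarrow> bernoulli_pmf (if y0 then \<rho> else q);
          f \<leftarrow> bernoulli_pmf \<nu>;
          return_pmf (if f then \<not> y else y) }"

fun iid_list :: "nat \<Rightarrow> 'a pmf \<Rightarrow> 'a list pmf" where
  "iid_list 0 p = return_pmf []"
| "iid_list (Suc n) p = do { x \<leftarrow> p; xs \<leftarrow> iid_list n p; return_pmf (x # xs) }"

definition score :: "real \<Rightarrow> bool \<Rightarrow> bool \<Rightarrow> real" where
  "score \<delta> u v = max (of_bool u) (of_bool v) + \<delta> * min (of_bool u) (of_bool v)"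

definition kth_largest :: "nat \<Rightarrow> real list \<Rightarrow> real" where
  "kth_largest k xs = rev (sort xs) ! (k - 1)"

text \<open>Joint distribution of (bar r_k^+, bar r_k^-); pi is the distribution of (ty0^+, ty0^-).\<close>
definition rank_pair :: "nat \<Rightarrow> real \<Rightarrow> real \<Rightarrow> real \<Rightarrow> (bool \<times> bool) pmf \<Rightarrow> real \<Rightarrow> nat
                          \<Rightarrow> (real \<times> real) pmf" where
  "rank_pair m \<rho> q \<nu> \<pi> \<delta> k =
     do { (u, v) \<leftarrow> \<pi>;
          xs \<leftarrow> iid_list m (noisy_label \<rho> q \<nu> True);
          ys \<leftarrow> iid_list m (noisy_label \<rho> q \<nu> False);
          return_pmf (kth_largest k (map (score \<delta> u) xs), kth_largest k (map (score \<delta> v) ys)) }"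

definition PrW :: "nat \<Rightarrow> real \<Rightarrow> real \<Rightarrow> real \<Rightarrow> (bool \<times> bool) pmf \<Rightarrow> real \<Rightarrow> nat \<Rightarrow> real" where
  "PrW m \<rho> q \<nu> \<pi> \<delta> k =
     measure_pmf.prob (rank_pair m \<rho> q \<nu> \<pi> \<delta> k) {(a, b). a > b}
     + 1/2 * measure_pmf.prob (rank_pair m \<rho> q \<nu> \<pi> \<delta> k) {(a, b). a = b}"

definition eventually_W2_from :: "real \<Rightarrow> real \<Rightarrow> real \<Rightarrow> (bool \<times> bool) pmf \<Rightarrow> real \<Rightarrow> nat \<Rightarrow> bool" where
  "eventually_W2_from \<rho> q \<nu> \<pi> \<delta> m0 \<longleftrightarrow>
     (\<forall>m\<ge>m0. 2 \<le> m \<longrightarrow> PrW m \<rho> q \<nu> \<pi> \<delta> 2 > PrW m \<rho> q \<nu> \<pi> \<delta> 1)"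

definition is_m0 :: "real \<Rightarrow> real \<Rightarrow> real \<Rightarrow> (bool \<times> bool) pmf \<Rightarrow> real \<Rightarrow> nat \<Rightarrow> bool" where
  "is_m0 \<rho> q \<nu> \<pi> \<delta> m0 \<longleftrightarrow>
     eventually_W2_from \<rho> q \<nu> \<pi> \<delta> m0 \<and>
     (\<forall>m'. eventually_W2_from \<rho> q \<nu> \<pi> \<delta> m' \<longrightarrow> m0 \<le> m')"

end

theory Submission
  imports Defs
begin

text \<open>If both noisy anchor labels are 0, every score is just the noisy auxiliary label, so the
  k-th largest score of the positive (negative) sample is the indicator that at least k of m
  independent Bernoulli(a) (Bernoulli(b)) labels are 1, where a = \<rho>(1-\<nu>) + (1-\<rho>)\<nu> and
  b = q(1-\<nu>) + (1-q)\<nu>. Only the probability of exactly one such label then separates k = 1 from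
  k = 2, and Pr(W_2) - Pr(W_1) = m (b(1-b)^(m-1) - a(1-a)^(m-1)) / 2. Since b \<le> a, this changes
  sign at most once, from negative to positive. For \<rho> = 1/2 and q = 1/10 the change happens
  after m = 3 when \<nu> = 0 (b = 1/10), but after m = 2 when \<nu> = 1/8 (b = 1/5).\<close>

definition flip_prob :: "real \<Rightarrow> real \<Rightarrow> real" where
  "flip_prob p \<nu> = p * (1 - \<nu>) + (1 - p) * \<nu>"

lemma flip_prob_bounds:
  assumes "0 \<le> p" "p \<le> 1" "0 \<le> \<nu>" "\<nu> \<le> 1"
  shows "0 \<le> flip_prob p \<nu>" "flip_prob p \<nu> \<le> 1"
proof -
  have "0 \<le> p * (1 - \<nu>)" "0 \<le> (1 - p) * \<nu>" "0 \<le> (1 - p) * (1 - \<nu>)" "0 \<le> p * \<nu>"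
    using assms by simp_all
  then show "0 \<le> flip_prob p \<nu>" "flip_prob p \<nu> \<le> 1"
    unfolding flip_prob_def by (simp_all add: algebra_simps)
qed

lemma flip_prob_mono:
  assumes "q \<le> \<rho>" "\<nu> \<le> 1/2"
  shows "flip_prob q \<nu> \<le> flip_prob \<rho> \<nu>"
proof -
  have "flip_prob \<rho> \<nu> - flip_prob q \<nu> = (\<rho> - q) * (1 - 2 * \<nu>)"
    by (simp add: flip_prob_def algebra_simps)
  moreover have "0 \<le> (\<rho> - q) * (1 - 2 * \<nu>)" using assms by simp
  ultimately show ?thesis by linarith
qed

lemma noisy_label_eq_bernoulli:
  assumes "0 \<le> \<rho>" "\<rho> \<le> 1" "0 \<le> q" "q \<le> 1" "0 \<le> \<nu>" "\<nu> \<le> 1"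
  shows "noisy_label \<rho> q \<nu> y0 = bernoulli_pmf (flip_prob (if y0 then \<rho> else q) \<nu>)"
proof -
  define p where "p = (if y0 then \<rho> else q)"
  have p: "0 \<le> p" "p \<le> 1" using assms by (simp_all add: p_def)
  show ?thesis
  proof (rule pmf_eqI)
    fix b
    show "pmf (noisy_label \<rho> q \<nu> y0) b = pmf (bernoulli_pmf (flip_prob (if y0 then \<rho> else q) \<nu>)) b"
      using p assms flip_prob_bounds[OF p assms(5,6)]
      unfolding noisy_label_def p_def[symmetric]
      by (cases b) (simp_all add: pmf_bind flip_prob_def algebra_simps)
  qed
qed

lemma iid_list_eq_replicate_pmf: "iid_list n p = replicate_pmf n p"
  by (induction n) simp_all

lemma sort_of_bool_list:
  "sort (map (\<lambda>b. of_bool b :: real) xs)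
     = replicate (length (filter Not xs)) 0 @ replicate (length (filter id xs)) 1"
proof (rule properties_for_sort)
  show "mset (replicate (length (filter Not xs)) 0 @ replicate (length (filter id xs)) 1)
          = mset (map (\<lambda>b. of_bool b :: real) xs)"
    by (induction xs) auto
qed (auto simp: sorted_append)

lemma kth_largest_of_bool:
  assumes "1 \<le> k" "k \<le> length xs"
  shows "kth_largest k (map of_bool xs) = of_bool (k \<le> length (filter id xs))"
proof -
  have "length (filter id xs) + length (filter Not xs) = length xs"
    using sum_length_filter_compl[of id xs] by (simp add: comp_def)
  then show ?thesis
    using assms unfolding kth_largest_def sort_of_bool_list by (auto simp: nth_append)
qed

lemma score_False: "score \<delta> False = of_bool"
  by (rule ext) (simp add: score_def)

lemma kth_largest_iid_bernoulli:
  assumes "1 \<le> k" "k \<le> m" "0 \<le> p" "p \<le> 1"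
  shows "map_pmf (\<lambda>xs. kth_largest k (map of_bool xs)) (replicate_pmf m (bernoulli_pmf p))
           = map_pmf of_bool (map_pmf (\<lambda>c. k \<le> c) (binomial_pmf m p))"
proof -
  have "map_pmf (\<lambda>xs. kth_largest k (map of_bool xs)) (replicate_pmf m (bernoulli_pmf p))
          = map_pmf (\<lambda>xs. of_bool (k \<le> length (filter id xs))) (replicate_pmf m (bernoulli_pmf p))"
    using assms by (intro map_pmf_cong) (auto simp: set_replicate_pmf kth_largest_of_bool)
  then show ?thesis
    using assms by (simp add: binomial_pmf_altdef map_pmf_comp comp_def)
qed

lemma rank_pair_negative_anchors:
  assumes "0 \<le> \<rho>" "\<rho> \<le> 1" "0 \<le> q" "q \<le> 1" "0 \<le> \<nu>" "\<nu> \<le> 1" "1 \<le> k" "k \<le> m"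
  shows "rank_pair m \<rho> q \<nu> (return_pmf (False, False)) \<delta> k
           = pair_pmf (map_pmf of_bool (map_pmf (\<lambda>c. k \<le> c) (binomial_pmf m (flip_prob \<rho> \<nu>))))
                      (map_pmf of_bool (map_pmf (\<lambda>c. k \<le> c) (binomial_pmf m (flip_prob q \<nu>))))"
proof -
  have "rank_pair m \<rho> q \<nu> (return_pmf (False, False)) \<delta> k
          = pair_pmf (map_pmf (\<lambda>xs. kth_largest k (map of_bool xs)) (replicate_pmf m (bernoulli_pmf (flip_prob \<rho> \<nu>))))
                     (map_pmf (\<lambda>xs. kth_largest k (map of_bool xs)) (replicate_pmf m (bernoulli_pmf (flip_prob q \<nu>))))"
    using assms unfolding rank_pair_def iid_list_eq_replicate_pmf pair_pmf_def
    by (simp add: noisy_label_eq_bernoulli score_False map_bind_pmf bind_map_pmf bind_return_pmf)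
  then show ?thesis
    using assms flip_prob_bounds[of \<rho> \<nu>] flip_prob_bounds[of q \<nu>]
    by (simp add: kth_largest_iid_bernoulli)
qed

lemma win_prob_of_bool_pair:
  fixes A B :: "bool pmf"
  defines "P \<equiv> pair_pmf (map_pmf (\<lambda>b. of_bool b :: real) A) (map_pmf of_bool B)"
  shows "measure_pmf.prob P {(a, b). a > b} + 1/2 * measure_pmf.prob P {(a, b). a = b}
           = 1/2 + (pmf A True - pmf B True) / 2"
proof -
  have P: "P = map_pmf (\<lambda>(a, b). (of_bool a, of_bool b)) (pair_pmf A B)"
    unfolding P_def by (simp add: map_pair)
  have gt: "(\<lambda>(a, b). (of_bool a :: real, of_bool b :: real)) -` {(a, b). a > b} = {(True, False)}"
    and eq: "(\<lambda>(a, b). (of_bool a :: real, of_bool b :: real)) -` {(a, b). a = b} = {(True, True), (False, False)}"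
    by (auto simp: of_bool_def split: if_splits)
  show ?thesis
    unfolding P measure_map_pmf gt eq
    by (simp add: measure_measure_pmf_finite pmf_pair pmf_False_conv_True field_simps)
qed

lemma PrW_negative_anchors:
  assumes "0 \<le> \<rho>" "\<rho> \<le> 1" "0 \<le> q" "q \<le> 1" "0 \<le> \<nu>" "\<nu> \<le> 1" "1 \<le> k" "k \<le> m"
  shows "PrW m \<rho> q \<nu> (return_pmf (False, False)) \<delta> k
           = 1/2 + (measure_pmf.prob (binomial_pmf m (flip_prob \<rho> \<nu>)) {k..}
                    - measure_pmf.prob (binomial_pmf m (flip_prob q \<nu>)) {k..}) / 2"
proof -
  have "pmf (map_pmf (\<lambda>c. k \<le> c) M) True = measure_pmf.prob M {k..}" for M :: "nat pmf"
    by (simp add: pmf_map vimage_def atLeast_def)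
  then show ?thesis
    unfolding PrW_def rank_pair_negative_anchors[OF assms] win_prob_of_bool_pair by simp
qed

lemma prob_atLeast_1_minus_atLeast_2:
  fixes M :: "nat pmf"
  shows "measure_pmf.prob M {1..} - measure_pmf.prob M {2..} = pmf M 1"
proof -
  have "{1..} - {2..} = {1::nat}" by auto
  then show ?thesis
    using measure_pmf.finite_measure_Diff[of "{1..}" M "{2..}"] by (simp add: measure_pmf_single)
qed

lemma PrW_gap_negative_anchors:
  assumes "0 \<le> \<rho>" "\<rho> \<le> 1" "0 \<le> q" "q \<le> 1" "0 \<le> \<nu>" "\<nu> \<le> 1" "2 \<le> m"
  defines "a \<equiv> flip_prob \<rho> \<nu>" and "b \<equiv> flip_prob q \<nu>"
  shows "PrW m \<rho> q \<nu> (return_pmf (False, False)) \<delta> 2 - PrW m \<rho> q \<nu> (return_pmf (False, False)) \<delta> 1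
           = real m * (b * (1 - b) ^ (m - 1) - a * (1 - a) ^ (m - 1)) / 2"
proof -
  have "PrW m \<rho> q \<nu> (return_pmf (False, False)) \<delta> 2 - PrW m \<rho> q \<nu> (return_pmf (False, False)) \<delta> 1
          = (pmf (binomial_pmf m b) 1 - pmf (binomial_pmf m a) 1) / 2"
    using assms PrW_negative_anchors[OF assms(1-6), of 1 m \<delta>] PrW_negative_anchors[OF assms(1-6), of 2 m \<delta>]
      prob_atLeast_1_minus_atLeast_2[of "binomial_pmf m a"] prob_atLeast_1_minus_atLeast_2[of "binomial_pmf m b"]
    by (simp add: field_simps)
  also have "\<dots> = real m * (b * (1 - b) ^ (m - 1) - a * (1 - a) ^ (m - 1)) / 2"
    using assms flip_prob_bounds[of \<rho> \<nu>] flip_prob_bounds[of q \<nu>] by (simp add: algebra_simps)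
  finally show ?thesis .
qed

lemma mult_power_less_propagate:
  fixes x y c d :: real
  assumes "x * c ^ n < y * d ^ n" "0 \<le> x" "0 \<le> c" "c \<le> d" "0 < d" "n \<le> n'"
  shows "x * c ^ n' < y * d ^ n'"
  using assms(6)
proof (induction n' rule: dec_induct)
  case (step n')
  have "x * c ^ Suc n' = (x * c ^ n') * c" by simp
  also have "\<dots> \<le> (x * c ^ n') * d" using assms by (simp add: mult_left_mono)
  also have "\<dots> < (y * d ^ n') * d" using step.IH assms(5) by simp
  finally show ?case by (simp add: mult_ac)
qed (use assms in simp)

lemma is_m0I:
  assumes "eventually_W2_from \<rho> q \<nu> \<pi> \<delta> (Suc n)" "2 \<le> n"
    and "PrW n \<rho> q \<nu> \<pi> \<delta> 2 < PrW n \<rho> q \<nu> \<pi> \<delta> 1"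
  shows "is_m0 \<rho> q \<nu> \<pi> \<delta> (Suc n)"
  unfolding is_m0_def
proof (intro conjI allI impI)
  fix m' assume "eventually_W2_from \<rho> q \<nu> \<pi> \<delta> m'"
  then have "\<not> n \<ge> m'"
    using assms(2,3) unfolding eventually_W2_from_def by force
  then show "Suc n \<le> m'" by simp
qed (fact assms(1))

lemma is_m0_negative_anchors:
  fixes \<rho> q \<nu> :: real
  defines "a \<equiv> flip_prob \<rho> \<nu>" and "b \<equiv> flip_prob q \<nu>"
  assumes "0 \<le> q" "q \<le> \<rho>" "\<rho> \<le> 1" "0 \<le> \<nu>" "\<nu> \<le> 1/2" "2 \<le> n"
    and "b * (1 - b) ^ (n - 1) < a * (1 - a) ^ (n - 1)" and "a * (1 - a) ^ n < b * (1 - b) ^ n"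
  shows "PrW n \<rho> q \<nu> (return_pmf (False, False)) \<delta> 2 < PrW n \<rho> q \<nu> (return_pmf (False, False)) \<delta> 1"
    and "is_m0 \<rho> q \<nu> (return_pmf (False, False)) \<delta> (Suc n)"
proof -
  have ranges: "0 \<le> \<rho>" "q \<le> 1" "\<nu> \<le> 1" using assms by simp_all
  note gap = PrW_gap_negative_anchors[OF ranges(1) assms(5) assms(3) ranges(2) assms(6) ranges(3),
      folded a_def b_def]
  have a: "0 \<le> a" "a \<le> 1" and b: "0 \<le> b" "b \<le> 1"
    using flip_prob_bounds assms ranges unfolding a_def b_def by auto
  have "b \<le> a" using flip_prob_mono assms unfolding a_def b_def by simp
  moreover have "b \<noteq> 1"
    using assms(10) \<open>b \<le> a\<close> a by auto
  ultimately have "1 - a \<le> 1 - b" "0 < 1 - b" using b by auto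
  show "PrW n \<rho> q \<nu> (return_pmf (False, False)) \<delta> 2 < PrW n \<rho> q \<nu> (return_pmf (False, False)) \<delta> 1"
  proof -
    have "real n * (b * (1 - b) ^ (n - 1) - a * (1 - a) ^ (n - 1)) < 0"
      using assms(8,9) by (simp add: mult_pos_neg)
    then show ?thesis using gap[of n \<delta>] assms(8) by linarith
  qed
  have "eventually_W2_from \<rho> q \<nu> (return_pmf (False, False)) \<delta> (Suc n)"
    unfolding eventually_W2_from_def
  proof (intro allI impI)
    fix m assume "Suc n \<le> m" "2 \<le> m"
    then have "a * (1 - a) ^ (m - 1) < b * (1 - b) ^ (m - 1)"
      using mult_power_less_propagate[OF assms(10) a(1)] a \<open>1 - a \<le> 1 - b\<close> \<open>0 < 1 - b\<close> by simp
    then have "0 < real m * (b * (1 - b) ^ (m - 1) - a * (1 - a) ^ (m - 1))"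
      using \<open>2 \<le> m\<close> by simp
    then show "PrW m \<rho> q \<nu> (return_pmf (False, False)) \<delta> 2 > PrW m \<rho> q \<nu> (return_pmf (False, False)) \<delta> 1"
      using gap[of m \<delta>] \<open>2 \<le> m\<close> by linarith
  qed
  then show "is_m0 \<rho> q \<nu> (return_pmf (False, False)) \<delta> (Suc n)"
    using is_m0I assms(8) \<open>PrW n \<rho> q \<nu> _ \<delta> 2 < _\<close> by blast
qed

theorem theorem2:
  fixes \<delta> :: real
  assumes "\<delta> > 0"
  shows "\<exists>\<rho> q (\<pi> :: (bool \<times> bool) pmf) \<nu>1 \<nu>2.
           0 < q \<and> q < \<rho> \<and> \<rho> < 1 \<and> pmf \<pi> (True, False) < 1 \<and>
           0 \<le> \<nu>1 \<and> \<nu>1 < 1/2 \<and> 0 \<le> \<nu>2 \<and> \<nu>2 < 1/2 \<and> \<nu>1 \<noteq> \<nu>2 \<and>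
           (\<forall>\<nu>\<in>{\<nu>1, \<nu>2}. \<exists>m\<ge>2. PrW m \<rho> q \<nu> \<pi> \<delta> 2 < PrW m \<rho> q \<nu> \<pi> \<delta> 1) \<and>
           (\<exists>m01 m02. is_m0 \<rho> q \<nu>1 \<pi> \<delta> m01 \<and> is_m0 \<rho> q \<nu>2 \<pi> \<delta> m02 \<and> m01 \<noteq> m02)"
proof -
  let ?\<pi> = "return_pmf (False, False) :: (bool \<times> bool) pmf"
  have noiseless: "PrW 3 (1/2) (1/10) 0 ?\<pi> \<delta> 2 < PrW 3 (1/2) (1/10) 0 ?\<pi> \<delta> 1"
    "is_m0 (1/2) (1/10) 0 ?\<pi> \<delta> 4"
    using is_m0_negative_anchors[of "1/10" "1/2" 0 3 \<delta>]
    by (simp_all add: flip_prob_def numeral_eq_Suc)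
  have noisy: "PrW 2 (1/2) (1/10) (1/8) ?\<pi> \<delta> 2 < PrW 2 (1/2) (1/10) (1/8) ?\<pi> \<delta> 1"
    "is_m0 (1/2) (1/10) (1/8) ?\<pi> \<delta> 3"
    using is_m0_negative_anchors[of "1/10" "1/2" "1/8" 2 \<delta>]
    by (simp_all add: flip_prob_def numeral_eq_Suc)
  have "\<forall>\<nu>\<in>{0, 1/8}. \<exists>m\<ge>2. PrW m (1/2) (1/10) \<nu> ?\<pi> \<delta> 2 < PrW m (1/2) (1/10) \<nu> ?\<pi> \<delta> 1"
    using noiseless(1) noisy(1) by (auto intro: exI[of _ 3] exI[of _ 2])
  moreover have "\<exists>m01 m02. is_m0 (1/2) (1/10) 0 ?\<pi> \<delta> m01 \<and> is_m0 (1/2) (1/10) (1/8) ?\<pi> \<delta> m02 \<and> m01 \<noteq> m02"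
    using noiseless(2) noisy(2) by force
  ultimately show ?thesis
    by (intro exI[of _ "1/2"] exI[of _ "1/10"] exI[of _ ?\<pi>] exI[of _ 0] exI[of _ "1/8"]) simp
qed

end
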